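(* Let $(M_n)_{n\ge0}$ be a locally square integrable real martingale with $M_0=0$, adapted to $(\mathcal{F}_n)$, which is heavy on left. Then for all $n\ge1$ and all $x,y>0$, $$\mathbb{P}\big(M_n\ge x,\ [M]_n\le y\big)\le\exp\left(-\frac{x^2}{2y}\right).$$
   Context: Write $\Delta M_k=M_k-M_{k-1}$ and $[M]_n=\sum_{k=1}^n\Delta M_k^2$. For $a>0$ and real $x$ let $T_a(x)=\min(|x|,a)\,\mathrm{sign}(x)$. The martingale $(M_n)$ is called heavy on left if for all $n\ge1$ and all $a>0$, $\mathbb{E}[T_a(\Delta M_n)\mid\mathcal{F}_{n-1}]\le0$ a.s. *)

theory Defs
  imports "HOL-Probability.Probability"
begin

definition filtration :: "'a measure \<Rightarrow> (nat \<Rightarrow> 'a measure) \<Rightarrow> bool" where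
  "filtration P F \<longleftrightarrow> (\<forall>n. subalgebra P (F n)) \<and> (\<forall>n m. n \<le> m \<longrightarrow> sets (F n) \<subseteq> sets (F m))"

definition martingale :: "'a measure \<Rightarrow> (nat \<Rightarrow> 'a measure) \<Rightarrow> (nat \<Rightarrow> 'a \<Rightarrow> real) \<Rightarrow> bool" where
  "martingale P F M \<longleftrightarrow> filtration P F \<and>
     (\<forall>n. M n \<in> borel_measurable (F n)) \<and>
     (\<forall>n. integrable P (M n)) \<and>
     (\<forall>n. AE \<omega> in P. real_cond_exp P (F n) (M (Suc n)) \<omega> = M n \<omega>)"

definition locally_square_integrable :: "'a measure \<Rightarrow> (nat \<Rightarrow> 'a \<Rightarrow> real) \<Rightarrow> bool" where
  "locally_square_integrable P M \<longleftrightarrow> (\<forall>n. integrable P (\<lambda>\<omega>. (M n \<omega>)\<^sup>2))"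

definition trunc :: "real \<Rightarrow> real \<Rightarrow> real" where
  "trunc a x = min \<bar>x\<bar> a * sgn x"

definition incr :: "(nat \<Rightarrow> 'a \<Rightarrow> real) \<Rightarrow> nat \<Rightarrow> 'a \<Rightarrow> real" where
  "incr M k \<omega> = M k \<omega> - M (k - 1) \<omega>"

definition qvar :: "(nat \<Rightarrow> 'a \<Rightarrow> real) \<Rightarrow> nat \<Rightarrow> 'a \<Rightarrow> real" where
  "qvar M n \<omega> = (\<Sum>k=1..n. (incr M k \<omega>)\<^sup>2)"

definition heavy_on_left :: "'a measure \<Rightarrow> (nat \<Rightarrow> 'a measure) \<Rightarrow> (nat \<Rightarrow> 'a \<Rightarrow> real) \<Rightarrow> bool" where
  "heavy_on_left P F M \<longleftrightarrow> (\<forall>n\<ge>1. \<forall>a>0.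
     AE \<omega> in P. real_cond_exp P (F (n - 1)) (\<lambda>\<xi>. trunc a (incr M n \<xi>)) \<omega> \<le> 0)"

end

theory Submission
  imports Defs
begin

text \<open>For \<open>t > 0\<close> put \<open>Z\<^sub>k = exp (t M\<^sub>k - t\<^sup>2/2 [M]\<^sub>k)\<close>; one step multiplies \<open>Z\<close> by
  \<open>\<phi>(s) = exp (s - s\<^sup>2/2)\<close> with \<open>s = t \<Delta>M\<^sub>k\<^sub>+\<^sub>1\<close>. Elementary calculus gives
  \<open>\<phi>(s) \<le> 1 + \<psi>(s\<^sup>+) - \<psi>(s\<^sup>-)\<close> for the concave \<open>\<psi>(u) = 1 - exp (-u - u\<^sup>2/2)\<close>, and
  \<open>\<psi>(u) = \<integral>\<^sub>0\<^sup>\<infinity> min u a w(a) da\<close> with \<open>w = -\<psi>'' \<ge> 0\<close>. Since \<open>min s\<^sup>+ a - min s\<^sup>- a = T\<^sub>a(s)\<close>,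
  heavy on left gives \<open>E[Z\<^sub>k min s\<^sup>+ a] \<le> E[Z\<^sub>k min s\<^sup>- a]\<close> for every \<open>a\<close>; integrating against \<open>w\<close>
  (Tonelli) yields \<open>E[Z\<^sub>k \<psi>(s\<^sup>+)] \<le> E[Z\<^sub>k \<psi>(s\<^sup>-)]\<close>, hence \<open>E Z\<^sub>k\<^sub>+\<^sub>1 \<le> E Z\<^sub>k \<le> 1\<close>.
  Markov's inequality for \<open>Z\<^sub>n\<close> with \<open>t = x/y\<close> concludes.\<close>

definition exp_quad :: "real \<Rightarrow> real" where
  "exp_quad s = exp (s - s\<^sup>2 / 2)"

definition psi :: "real \<Rightarrow> real" where
  "psi u = 1 - exp_quad (- u)"

definition psi_weight :: "real \<Rightarrow> real" where
  "psi_weight a = exp_quad (- a) * ((1 + a)\<^sup>2 - 1)"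

lemma exp_quad_0 [simp]: "exp_quad 0 = 1"
  by (simp add: exp_quad_def)

lemma exp_quad_pos [simp]: "0 < exp_quad s"
  by (simp add: exp_quad_def)

lemma exp_quad_le: "exp_quad s \<le> exp (1 / 2)"
proof -
  have "s - s\<^sup>2 / 2 \<le> 1 / 2"
    using zero_le_power2[of "s - 1"] by (simp add: power2_eq_square algebra_simps)
  then show ?thesis by (simp add: exp_quad_def)
qed

lemma psi_nonneg: "0 \<le> u \<Longrightarrow> 0 \<le> psi u"
proof -
  assume "0 \<le> u"
  then have "- u - u\<^sup>2 / 2 \<le> 0"
    using zero_le_power2[of u] by linarith
  then show ?thesis by (simp add: psi_def exp_quad_def)
qed

lemma psi_le_1: "psi u \<le> 1"
  by (simp add: psi_def less_imp_le)

lemma psi_weight_nonneg: "0 \<le> a \<Longrightarrow> 0 \<le> psi_weight a"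
  unfolding psi_weight_def by (intro mult_nonneg_nonneg) (simp_all add: less_imp_le one_le_power)

lemma measurable_exp_quad [measurable]: "exp_quad \<in> borel_measurable borel"
  unfolding exp_quad_def by measurable

lemma measurable_psi [measurable]: "psi \<in> borel_measurable borel"
  unfolding psi_def by measurable

lemma measurable_psi_weight [measurable]: "psi_weight \<in> borel_measurable borel"
  unfolding psi_weight_def by measurable

lemma sinh_le_mult_cosh:
  fixes u :: real
  assumes "0 \<le> u"
  shows "sinh u \<le> u * cosh u"
proof -
  have "(\<lambda>v. v * cosh v - sinh v) 0 \<le> (\<lambda>v. v * cosh v - sinh v) u"
  proof (rule DERIV_nonneg_imp_nondecreasing[OF assms])
    fix v :: real assume "0 \<le> v" "v \<le> u"
    have "((\<lambda>v. v * cosh v - sinh v) has_real_derivative v * sinh v) (at v)"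
      by (rule derivative_eq_intros refl | simp)+
    then show "\<exists>d. ((\<lambda>v. v * cosh v - sinh v) has_real_derivative d) (at v) \<and> 0 \<le> d"
      using \<open>0 \<le> v\<close> by auto
  qed
  then show ?thesis by simp
qed

lemma cosh_le_exp_half_square:
  fixes u :: real
  assumes "0 \<le> u"
  shows "cosh u \<le> exp (u\<^sup>2 / 2)"
proof -
  let ?q = "\<lambda>v. exp (- v\<^sup>2 / 2) * cosh v"
  have "?q u \<le> ?q 0"
  proof (rule DERIV_nonpos_imp_nonincreasing[OF assms])
    fix v :: real assume v: "0 \<le> v" "v \<le> u"
    have "(?q has_real_derivative exp (- v\<^sup>2 / 2) * (sinh v - v * cosh v)) (at v)"
      by (rule derivative_eq_intros refl | simp)+ (simp add: algebra_simps)
    moreover have "exp (- v\<^sup>2 / 2) * (sinh v - v * cosh v) \<le> 0"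
      using sinh_le_mult_cosh[OF v(1)] by (simp add: mult_nonneg_nonpos)
    ultimately show "\<exists>d. (?q has_real_derivative d) (at v) \<and> d \<le> 0" by blast
  qed
  then show ?thesis by (simp add: exp_minus field_simps)
qed

lemma exp_quad_le_psi: "exp_quad s \<le> 1 + psi (max s 0) - psi (max (- s) 0)"
proof (cases "0 < s")
  case True
  have "exp_quad s + exp_quad (- s) = 2 * exp (- s\<^sup>2 / 2) * cosh s"
    by (simp add: exp_quad_def cosh_def field_simps flip: exp_add)
  also have "\<dots> \<le> 2 * exp (- s\<^sup>2 / 2) * exp (s\<^sup>2 / 2)"
    using cosh_le_exp_half_square[of s] True by simp
  also have "\<dots> = 2"
    by (simp flip: exp_add)
  finally show ?thesis
    using True by (simp add: psi_def)
qed (simp add: psi_def)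

lemma psi_eq_set_nn_integral:
  assumes u: "0 \<le> u"
  shows "ennreal (psi u) = (\<integral>\<^sup>+a\<in>{0..}. ennreal (psi_weight a * min u a) \<partial>lborel)"
proof -
  define G where "G a = 1 - (1 + a + a\<^sup>2) * exp_quad (- a)" for a
  define H where "H a = - (1 + a) * exp_quad (- a)" for a
  have G: "(G has_real_derivative a * psi_weight a) (at a)" for a
    unfolding G_def psi_weight_def exp_quad_def
    by (rule derivative_eq_intros refl | simp)+ (simp add: algebra_simps power2_eq_square)
  have H: "(H has_real_derivative psi_weight a) (at a)" for a
    unfolding H_def psi_weight_def exp_quad_def
    by (rule derivative_eq_intros refl | simp)+ (simp add: algebra_simps power2_eq_square)
  have H_lim: "(H \<longlongrightarrow> 0) at_top"
    unfolding H_def exp_quad_def by real_asymp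
  have tail: "(\<integral>\<^sup>+a. ennreal (psi_weight a) * indicator {u..} a \<partial>lborel) = ennreal (0 - H u)"
    by (rule nn_integral_FTC_atLeast[OF _ _ _ H_lim]) (use H psi_weight_nonneg u in auto)
  have head: "(\<integral>\<^sup>+a. ennreal (a * psi_weight a) * indicator {0..u} a \<partial>lborel) = ennreal (G u - G 0)"
    by (rule nn_integral_FTC_Icc) (use G psi_weight_nonneg u in auto)
  have "AE a in lborel. ennreal (psi_weight a * min u a) * indicator {0..} a =
      ennreal (a * psi_weight a) * indicator {0..u} a + ennreal u * (ennreal (psi_weight a) * indicator {u..} a)"
    using AE_lborel_singleton[of u]
    by eventually_elim (use u psi_weight_nonneg in \<open>auto simp: indicator_def min_def ennreal_mult' mult.commute\<close>)
  then have "(\<integral>\<^sup>+a\<in>{0..}. ennreal (psi_weight a * min u a) \<partial>lborel) =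
      ennreal (G u - G 0) + ennreal u * ennreal (0 - H u)"
    by (simp add: nn_integral_cong_AE nn_integral_add nn_integral_cmult head tail)
  also have "\<dots> = ennreal (G u - G 0 + u * (0 - H u))"
  proof -
    have "G 0 \<le> G u"
      by (rule DERIV_nonneg_imp_nondecreasing[OF u]) (use G psi_weight_nonneg in \<open>auto intro!: mult_nonneg_nonneg\<close>)
    moreover have "0 \<le> 0 - H u"
      using u by (simp add: H_def mult_nonpos_nonneg less_imp_le)
    ultimately show ?thesis
      using u by (simp only: ennreal_plus ennreal_mult diff_ge_0_iff_ge mult_nonneg_nonneg)
  qed
  also have "G u - G 0 + u * (0 - H u) = psi u"
    by (simp add: G_def H_def psi_def algebra_simps power2_eq_square)
  finally show ?thesis ..
qed

lemma nn_integral_mult_psi: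
  assumes "sigma_finite_measure N"
    and [measurable]: "Z \<in> borel_measurable N" "g \<in> borel_measurable N"
    and Z: "\<And>\<omega>. \<omega> \<in> space N \<Longrightarrow> 0 \<le> Z \<omega>" and g: "\<And>\<omega>. \<omega> \<in> space N \<Longrightarrow> 0 \<le> g \<omega>"
  shows "(\<integral>\<^sup>+\<omega>. ennreal (Z \<omega> * psi (g \<omega>)) \<partial>N) =
    (\<integral>\<^sup>+a\<in>{0..}. ennreal (psi_weight a) * (\<integral>\<^sup>+\<omega>. ennreal (Z \<omega> * min (g \<omega>) a) \<partial>N) \<partial>lborel)"
proof -
  interpret pair_sigma_finite N lborel
    by (simp add: pair_sigma_finite_def assms(1) lborel.sigma_finite_measure_axioms)
  have "(\<integral>\<^sup>+\<omega>. ennreal (Z \<omega> * psi (g \<omega>)) \<partial>N) =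
      (\<integral>\<^sup>+\<omega>. (\<integral>\<^sup>+a. ennreal (Z \<omega>) * (ennreal (psi_weight a * min (g \<omega>) a) * indicator {0..} a) \<partial>lborel) \<partial>N)"
    by (intro nn_integral_cong)
      (simp add: Z g psi_nonneg ennreal_mult psi_eq_set_nn_integral nn_integral_cmult)
  also have "\<dots> = (\<integral>\<^sup>+a. (\<integral>\<^sup>+\<omega>. ennreal (Z \<omega>) * (ennreal (psi_weight a * min (g \<omega>) a) * indicator {0..} a) \<partial>N) \<partial>lborel)"
    by (rule Fubini'[symmetric]) measurable
  also have "\<dots> = (\<integral>\<^sup>+a\<in>{0..}. ennreal (psi_weight a) * (\<integral>\<^sup>+\<omega>. ennreal (Z \<omega> * min (g \<omega>) a) \<partial>N) \<partial>lborel)"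
  proof (intro nn_integral_cong)
    fix a :: real
    have "ennreal (Z \<omega>) * ennreal (psi_weight a * min (g \<omega>) a) = ennreal (psi_weight a) * ennreal (Z \<omega> * min (g \<omega>) a)"
      if "0 \<le> a" "\<omega> \<in> space N" for \<omega>
    proof -
      have "0 \<le> Z \<omega>" "0 \<le> psi_weight a" "0 \<le> min (g \<omega>) a"
        using that Z g psi_weight_nonneg by auto
      then show ?thesis
        by (simp add: mult.left_commute flip: ennreal_mult)
    qed
    then show "(\<integral>\<^sup>+\<omega>. ennreal (Z \<omega>) * (ennreal (psi_weight a * min (g \<omega>) a) * indicator {0..} a) \<partial>N) =
        ennreal (psi_weight a) * (\<integral>\<^sup>+\<omega>. ennreal (Z \<omega> * min (g \<omega>) a) \<partial>N) * indicator {0..} a"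
      by (cases "0 \<le> a") (simp_all add: nn_integral_cmult cong: nn_integral_cong)
  qed
  finally show ?thesis .
qed

lemma (in finite_measure) integrable_mult_bounded:
  fixes Z f :: "'a \<Rightarrow> real"
  assumes "Z \<in> borel_measurable M" "f \<in> borel_measurable M"
    and "\<And>\<omega>. \<omega> \<in> space M \<Longrightarrow> \<bar>Z \<omega>\<bar> \<le> B" "\<And>\<omega>. \<omega> \<in> space M \<Longrightarrow> \<bar>f \<omega>\<bar> \<le> C"
  shows "integrable M (\<lambda>\<omega>. Z \<omega> * f \<omega>)"
proof (rule integrable_const_bound[where B = "B * C"])
  show "AE \<omega> in M. norm (Z \<omega> * f \<omega>) \<le> B * C"
    using assms(3,4) by (auto intro!: AE_I2 simp: abs_mult mult_mono')
qed (use assms(1,2) in simp)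

lemma (in finite_measure) integral_mult_psi_mono:
  assumes [measurable]: "Z \<in> borel_measurable M" "g \<in> borel_measurable M" "h \<in> borel_measurable M"
    and Z: "\<And>\<omega>. \<omega> \<in> space M \<Longrightarrow> 0 \<le> Z \<omega> \<and> Z \<omega> \<le> B"
    and g: "\<And>\<omega>. \<omega> \<in> space M \<Longrightarrow> 0 \<le> g \<omega>" and h: "\<And>\<omega>. \<omega> \<in> space M \<Longrightarrow> 0 \<le> h \<omega>"
    and min_le: "\<And>a. 0 < a \<Longrightarrow> (\<integral>\<omega>. Z \<omega> * min (g \<omega>) a \<partial>M) \<le> (\<integral>\<omega>. Z \<omega> * min (h \<omega>) a \<partial>M)"
  shows "(\<integral>\<omega>. Z \<omega> * psi (g \<omega>) \<partial>M) \<le> (\<integral>\<omega>. Z \<omega> * psi (h \<omega>) \<partial>M)"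
proof -
  have nn_integral_eq: "(\<integral>\<^sup>+\<omega>. ennreal (Z \<omega> * f \<omega>) \<partial>M) = ennreal (\<integral>\<omega>. Z \<omega> * f \<omega> \<partial>M)"
    if [measurable]: "f \<in> borel_measurable M" and f: "\<And>\<omega>. \<omega> \<in> space M \<Longrightarrow> 0 \<le> f \<omega> \<and> f \<omega> \<le> C" for f C
  proof (rule nn_integral_eq_integral)
    show "integrable M (\<lambda>\<omega>. Z \<omega> * f \<omega>)"
      by (rule integrable_mult_bounded[where B = B and C = C]) (use Z f in auto)
  qed (use Z f in \<open>auto intro!: AE_I2\<close>)
  have psi_eq: "(\<integral>\<^sup>+\<omega>. ennreal (Z \<omega> * psi (k \<omega>)) \<partial>M) = ennreal (\<integral>\<omega>. Z \<omega> * psi (k \<omega>) \<partial>M)"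
    if [measurable]: "k \<in> borel_measurable M" and "\<And>\<omega>. \<omega> \<in> space M \<Longrightarrow> 0 \<le> k \<omega>" for k
    by (rule nn_integral_eq[where C = 1]) (use that psi_nonneg psi_le_1 in auto)
  have min_mono: "(\<integral>\<^sup>+\<omega>. ennreal (Z \<omega> * min (g \<omega>) a) \<partial>M) \<le> (\<integral>\<^sup>+\<omega>. ennreal (Z \<omega> * min (h \<omega>) a) \<partial>M)"
    if "0 \<le> a" for a
  proof (cases "a = 0")
    case False
    with that min_le[of a] show ?thesis
      by (subst (1 2) nn_integral_eq[where C = a]) (use g h in \<open>auto intro: ennreal_leI\<close>)
  qed (use g h in \<open>simp add: min_absorb2 cong: nn_integral_cong\<close>)
  have "ennreal (\<integral>\<omega>. Z \<omega> * psi (g \<omega>) \<partial>M) = (\<integral>\<^sup>+\<omega>. ennreal (Z \<omega> * psi (g \<omega>)) \<partial>M)"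
    by (rule psi_eq[symmetric]) (use g in auto)
  also have "\<dots> = (\<integral>\<^sup>+a\<in>{0..}. ennreal (psi_weight a) * (\<integral>\<^sup>+\<omega>. ennreal (Z \<omega> * min (g \<omega>) a) \<partial>M) \<partial>lborel)"
    by (rule nn_integral_mult_psi[OF sigma_finite_measure_axioms]) (use Z g in auto)
  also have "\<dots> \<le> (\<integral>\<^sup>+a\<in>{0..}. ennreal (psi_weight a) * (\<integral>\<^sup>+\<omega>. ennreal (Z \<omega> * min (h \<omega>) a) \<partial>M) \<partial>lborel)"
    by (intro nn_integral_mono) (simp add: indicator_def mult_left_mono min_mono)
  also have "\<dots> = (\<integral>\<^sup>+\<omega>. ennreal (Z \<omega> * psi (h \<omega>)) \<partial>M)"
    by (rule nn_integral_mult_psi[OF sigma_finite_measure_axioms, symmetric]) (use Z h in auto)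
  also have "\<dots> = ennreal (\<integral>\<omega>. Z \<omega> * psi (h \<omega>) \<partial>M)"
    by (rule psi_eq) (use h in auto)
  finally have "ennreal (\<integral>\<omega>. Z \<omega> * psi (g \<omega>) \<partial>M) \<le> ennreal (\<integral>\<omega>. Z \<omega> * psi (h \<omega>) \<partial>M)" .
  moreover have "0 \<le> (\<integral>\<omega>. Z \<omega> * psi (h \<omega>) \<partial>M)"
    using Z h psi_nonneg by (auto intro!: integral_nonneg_AE AE_I2)
  ultimately show ?thesis
    by (simp add: ennreal_le_iff)
qed

lemma measurable_trunc [measurable]: "trunc a \<in> borel_measurable borel"
  unfolding trunc_def by measurable

lemma abs_trunc_le: "0 \<le> a \<Longrightarrow> \<bar>trunc a s\<bar> \<le> a"
  by (auto simp: trunc_def abs_mult sgn_if)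

lemma trunc_mult:
  assumes "0 < t"
  shows "trunc a (t * s) = t * trunc (a / t) s"
proof -
  have "min (t * \<bar>s\<bar>) a = t * min \<bar>s\<bar> (a / t)"
    using assms by (simp add: min_mult_distrib_left)
  then show ?thesis
    using assms by (simp add: trunc_def abs_mult sgn_mult mult.commute)
qed

lemma trunc_eq_min_diff: "0 \<le> a \<Longrightarrow> trunc a s = min (max s 0) a - min (max (- s) 0) a"
  by (cases s "0 :: real" rule: linorder_cases) (auto simp: trunc_def min_def)

lemma (in finite_measure) integral_mult_exp_quad_le:
  assumes [measurable]: "Z \<in> borel_measurable M" "D \<in> borel_measurable M"
    and Z: "\<And>\<omega>. \<omega> \<in> space M \<Longrightarrow> 0 \<le> Z \<omega> \<and> Z \<omega> \<le> B"
    and trunc_le: "\<And>a. 0 < a \<Longrightarrow> (\<integral>\<omega>. Z \<omega> * trunc a (D \<omega>) \<partial>M) \<le> 0"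
  shows "(\<integral>\<omega>. Z \<omega> * exp_quad (D \<omega>) \<partial>M) \<le> (\<integral>\<omega>. Z \<omega> \<partial>M)"
proof -
  have int: "integrable M (\<lambda>\<omega>. Z \<omega> * f \<omega>)"
    if "f \<in> borel_measurable M" and "\<And>\<omega>. \<omega> \<in> space M \<Longrightarrow> \<bar>f \<omega>\<bar> \<le> C" for f C
    by (rule integrable_mult_bounded[where B = B]) (use that Z in auto)
  let ?pos = "\<lambda>\<omega>. max (D \<omega>) 0" and ?neg = "\<lambda>\<omega>. max (- D \<omega>) 0"
  have "(\<integral>\<omega>. Z \<omega> * min (?pos \<omega>) a \<partial>M) \<le> (\<integral>\<omega>. Z \<omega> * min (?neg \<omega>) a \<partial>M)" if "0 < a" for a
  proof -
    have "(\<integral>\<omega>. Z \<omega> * min (?pos \<omega>) a \<partial>M) - (\<integral>\<omega>. Z \<omega> * min (?neg \<omega>) a \<partial>M) =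
        (\<integral>\<omega>. Z \<omega> * trunc a (D \<omega>) \<partial>M)"
      using that by (subst Bochner_Integration.integral_diff[symmetric])
        (auto intro!: int[where C = a] simp: trunc_eq_min_diff less_imp_le right_diff_distrib)
    with trunc_le[OF that] show ?thesis by simp
  qed
  then have psi_le: "(\<integral>\<omega>. Z \<omega> * psi (?pos \<omega>) \<partial>M) \<le> (\<integral>\<omega>. Z \<omega> * psi (?neg \<omega>) \<partial>M)"
    by (intro integral_mult_psi_mono[where B = B] Z) auto
  have psi_int: "integrable M (\<lambda>\<omega>. Z \<omega> * psi (f \<omega>))"
    if [measurable]: "f \<in> borel_measurable M" and "\<And>\<omega>. \<omega> \<in> space M \<Longrightarrow> 0 \<le> f \<omega>" for f
    by (rule int[where C = 1]) (use that psi_nonneg psi_le_1 in \<open>auto simp: abs_le_iff\<close>)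
  have "(\<integral>\<omega>. Z \<omega> * exp_quad (D \<omega>) \<partial>M) \<le>
      (\<integral>\<omega>. Z \<omega> + Z \<omega> * psi (?pos \<omega>) - Z \<omega> * psi (?neg \<omega>) \<partial>M)"
  proof (rule integral_mono)
    show "integrable M (\<lambda>\<omega>. Z \<omega> * exp_quad (D \<omega>))"
      by (rule int[where C = "exp (1 / 2)"]) (auto simp: less_imp_le exp_quad_le)
    show "integrable M (\<lambda>\<omega>. Z \<omega> + Z \<omega> * psi (?pos \<omega>) - Z \<omega> * psi (?neg \<omega>))"
      using int[of "\<lambda>_. 1" 1] psi_int by auto
    fix \<omega> assume "\<omega> \<in> space M"
    with Z have "Z \<omega> * exp_quad (D \<omega>) \<le> Z \<omega> * (1 + psi (?pos \<omega>) - psi (?neg \<omega>))"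
      by (simp add: mult_left_mono exp_quad_le_psi)
    then show "Z \<omega> * exp_quad (D \<omega>) \<le> Z \<omega> + Z \<omega> * psi (?pos \<omega>) - Z \<omega> * psi (?neg \<omega>)"
      by (simp add: algebra_simps)
  qed
  also have "\<dots> = (\<integral>\<omega>. Z \<omega> \<partial>M) + (\<integral>\<omega>. Z \<omega> * psi (?pos \<omega>) \<partial>M) - (\<integral>\<omega>. Z \<omega> * psi (?neg \<omega>) \<partial>M)"
    using int[of "\<lambda>_. 1" 1] psi_int by simp
  finally show ?thesis
    using psi_le by simp
qed

lemma (in sigma_finite_subalgebra) integral_mult_nonpos_if_real_cond_exp_nonpos:
  assumes "integrable M (\<lambda>\<omega>. Z \<omega> * X \<omega>)" "Z \<in> borel_measurable F" "X \<in> borel_measurable M"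
    and "\<And>\<omega>. \<omega> \<in> space M \<Longrightarrow> 0 \<le> Z \<omega>"
    and "AE \<omega> in M. real_cond_exp M F X \<omega> \<le> 0"
  shows "(\<integral>\<omega>. Z \<omega> * X \<omega> \<partial>M) \<le> 0"
proof -
  have "(\<integral>\<omega>. Z \<omega> * X \<omega> \<partial>M) = (\<integral>\<omega>. Z \<omega> * real_cond_exp M F X \<omega> \<partial>M)"
    using real_cond_exp_intg(2)[OF assms(1-3)] by simp
  also have "\<dots> \<le> (\<integral>\<omega>. 0 \<partial>M)"
  proof (rule integral_mono_AE)
    show "AE \<omega> in M. Z \<omega> * real_cond_exp M F X \<omega> \<le> 0"
      using assms(5) AE_space by eventually_elim (use assms(4) in \<open>auto intro: mult_nonneg_nonpos\<close>)
  qed (use real_cond_exp_intg(1)[OF assms(1-3)] in auto)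
  finally show ?thesis by simp
qed

lemma filtration_measurable_mono:
  assumes "filtration P F" "j \<le> k" "f \<in> borel_measurable (F j)"
  shows "f \<in> borel_measurable (F k)"
proof (rule measurable_from_subalg[OF _ assms(3)])
  show "subalgebra (F k) (F j)"
    using assms(1,2) unfolding filtration_def subalgebra_def by metis
qed

lemma filtration_measurable_space:
  "filtration P F \<Longrightarrow> f \<in> borel_measurable (F k) \<Longrightarrow> f \<in> borel_measurable P"
  unfolding filtration_def by (blast intro: measurable_from_subalg)

lemma filtration_sigma_finite_subalgebra:
  assumes "prob_space P" "filtration P F"
  shows "sigma_finite_subalgebra P (F k)"
proof (rule finite_measure_subalgebra_is_sigma_finite)
  show "finite_measure_subalgebra P (F k)"
    using assms unfolding filtration_def finite_measure_subalgebra_def finite_measure_subalgebra_axioms_def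
    by (auto intro: prob_space.finite_measure)
qed

lemma heavy_on_left_integral_mult_trunc_nonpos:
  assumes P: "prob_space P" and F: "filtration P F" and heavy: "heavy_on_left P F M"
    and [measurable]: "incr M (Suc k) \<in> borel_measurable P"
    and Z_F: "Z \<in> borel_measurable (F k)"
    and Z: "\<And>\<omega>. \<omega> \<in> space P \<Longrightarrow> 0 \<le> Z \<omega> \<and> Z \<omega> \<le> B" and a: "0 < a"
  shows "(\<integral>\<omega>. Z \<omega> * trunc a (incr M (Suc k) \<omega>) \<partial>P) \<le> 0"
proof -
  interpret prob_space P by (rule P)
  interpret sigma_finite_subalgebra P "F k"
    by (rule filtration_sigma_finite_subalgebra[OF P F])
  show ?thesis
  proof (rule integral_mult_nonpos_if_real_cond_exp_nonpos)
    show "integrable P (\<lambda>\<omega>. Z \<omega> * trunc a (incr M (Suc k) \<omega>))"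
      by (rule integrable_mult_bounded[where B = B and C = a])
        (use Z a filtration_measurable_space[OF F Z_F] in \<open>auto intro: abs_trunc_le\<close>)
    show "AE \<omega> in P. real_cond_exp P (F k) (\<lambda>\<xi>. trunc a (incr M (Suc k) \<xi>)) \<omega> \<le> 0"
      using heavy a unfolding heavy_on_left_def by (metis diff_Suc_1 le_add1 plus_1_eq_Suc)
  qed (use Z Z_F in auto)
qed

definition exp_qvar_process :: "real \<Rightarrow> (nat \<Rightarrow> 'a \<Rightarrow> real) \<Rightarrow> nat \<Rightarrow> 'a \<Rightarrow> real" where
  "exp_qvar_process t M k \<omega> = exp (t * M k \<omega> - t\<^sup>2 / 2 * qvar M k \<omega>)"

lemma exp_qvar_process_Suc:
  "exp_qvar_process t M (Suc k) \<omega> = exp_qvar_process t M k \<omega> * exp_quad (t * incr M (Suc k) \<omega>)"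
proof -
  have "M (Suc k) \<omega> = M k \<omega> + incr M (Suc k) \<omega>"
    by (simp add: incr_def)
  moreover have "qvar M (Suc k) \<omega> = qvar M k \<omega> + (incr M (Suc k) \<omega>)\<^sup>2"
    by (simp add: qvar_def)
  ultimately show ?thesis
    by (simp add: exp_qvar_process_def exp_quad_def power2_eq_square algebra_simps flip: exp_add)
qed

lemma exp_qvar_process_pos [simp]: "0 < exp_qvar_process t M k \<omega>"
  by (simp add: exp_qvar_process_def)

lemma exp_qvar_process_0: "M 0 \<omega> = 0 \<Longrightarrow> exp_qvar_process t M 0 \<omega> = 1"
  by (simp add: exp_qvar_process_def qvar_def)

lemma exp_qvar_process_le: "M 0 \<omega> = 0 \<Longrightarrow> exp_qvar_process t M k \<omega> \<le> exp (1 / 2) ^ k"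
proof (induction k)
  case (Suc k)
  have "exp_qvar_process t M (Suc k) \<omega> \<le> exp (1 / 2) ^ k * exp (1 / 2)"
    unfolding exp_qvar_process_Suc using Suc
    by (intro mult_mono') (auto simp: exp_quad_le less_imp_le)
  then show ?case
    by (simp add: mult.commute)
qed (simp add: exp_qvar_process_0)

lemma exp_qvar_process_measurable:
  assumes "filtration P F" "\<And>k. M k \<in> borel_measurable (F k)"
  shows "exp_qvar_process t M k \<in> borel_measurable (F k)"
proof -
  have M: "M j \<in> borel_measurable (F k)" if "j \<le> k" for j
    using filtration_measurable_mono[OF assms(1) that assms(2)] .
  have [measurable]: "qvar M k \<in> borel_measurable (F k)"
    unfolding qvar_def incr_def
    by (intro borel_measurable_sum borel_measurable_power borel_measurable_diff M) auto
  show ?thesis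
    using M[of k] unfolding exp_qvar_process_def by measurable
qed

lemma exp_half_square_le_exp_qvar_process:
  assumes "0 < x" "0 < y" "x \<le> M n \<omega>" "qvar M n \<omega> \<le> y"
  shows "exp (x\<^sup>2 / (2 * y)) \<le> exp_qvar_process (x / y) M n \<omega>"
proof -
  have "x\<^sup>2 / (2 * y) = x / y * x - (x / y)\<^sup>2 / 2 * y"
    using assms(2) by (simp add: power2_eq_square field_simps)
  also have "\<dots> \<le> x / y * M n \<omega> - (x / y)\<^sup>2 / 2 * qvar M n \<omega>"
    using assms by (intro diff_mono mult_left_mono) auto
  finally show ?thesis
    by (simp add: exp_qvar_process_def)
qed

lemma integral_exp_qvar_process_le_1:
  assumes P: "prob_space P" and F: "filtration P F" and adapted: "\<And>k. M k \<in> borel_measurable (F k)"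
    and M0: "\<And>\<omega>. \<omega> \<in> space P \<Longrightarrow> M 0 \<omega> = 0"
    and heavy: "heavy_on_left P F M" and t: "0 < t"
  shows "(\<integral>\<omega>. exp_qvar_process t M k \<omega> \<partial>P) \<le> 1"
proof (induction k)
  case 0
  have "(\<integral>\<omega>. exp_qvar_process t M 0 \<omega> \<partial>P) = (\<integral>\<omega>. 1 \<partial>P)"
    by (intro Bochner_Integration.integral_cong) (simp_all add: M0 exp_qvar_process_0)
  then show ?case
    using prob_space.prob_space[OF P] by simp
next
  case (Suc k)
  interpret prob_space P by (rule P)
  let ?Z = "exp_qvar_process t M k" and ?D = "incr M (Suc k)"
  have Z_F [measurable]: "?Z \<in> borel_measurable (F k)"
    by (rule exp_qvar_process_measurable[OF F adapted])
  have [measurable]: "?Z \<in> borel_measurable P"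
    by (rule filtration_measurable_space[OF F Z_F])
  have [measurable]: "?D \<in> borel_measurable P"
    using filtration_measurable_space[OF F adapted] unfolding incr_def by measurable
  have Z: "0 \<le> ?Z \<omega> \<and> ?Z \<omega> \<le> exp (1 / 2) ^ k" if "\<omega> \<in> space P" for \<omega>
    using exp_qvar_process_le[of M, OF M0[OF that]] by (simp add: less_imp_le)
  have "(\<integral>\<omega>. ?Z \<omega> * trunc a (t * ?D \<omega>) \<partial>P) \<le> 0" if "0 < a" for a
    using heavy_on_left_integral_mult_trunc_nonpos[OF P F heavy _ Z_F Z, of "a / t"] that t
    by (simp add: trunc_mult mult.left_commute mult_nonneg_nonpos)
  then have "(\<integral>\<omega>. ?Z \<omega> * exp_quad (t * ?D \<omega>) \<partial>P) \<le> (\<integral>\<omega>. ?Z \<omega> \<partial>P)"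
    by (intro integral_mult_exp_quad_le[where B = "exp (1 / 2) ^ k"] Z) auto
  with Suc.IH show ?case
    by (simp add: exp_qvar_process_Suc)
qed

theorem theorem4p1:
  fixes P :: "'a measure" and F :: "nat \<Rightarrow> 'a measure" and M :: "nat \<Rightarrow> 'a \<Rightarrow> real"
  assumes "prob_space P"
    and "martingale P F M"
    and "locally_square_integrable P M"
    and "\<forall>\<omega>\<in>space P. M 0 \<omega> = 0"
    and "heavy_on_left P F M"
    and "n \<ge> 1" and "x > 0" and "y > 0"
  shows "measure P {\<omega>\<in>space P. M n \<omega> \<ge> x \<and> qvar M n \<omega> \<le> y} \<le> exp (- x\<^sup>2 / (2 * y))"
proof -
  interpret prob_space P by (rule assms(1))
  have F: "filtration P F" and adapted: "\<And>k. M k \<in> borel_measurable (F k)"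
    using assms(2) unfolding martingale_def by auto
  define Z where "Z = exp_qvar_process (x / y) M n"
  define c where "c = exp (x\<^sup>2 / (2 * y))"
  have [measurable]: "Z \<in> borel_measurable P"
    unfolding Z_def by (rule filtration_measurable_space[OF F exp_qvar_process_measurable[OF F adapted]])
  have Z: "0 \<le> Z \<omega> \<and> Z \<omega> \<le> exp (1 / 2) ^ n" if "\<omega> \<in> space P" for \<omega>
    using exp_qvar_process_le[of M \<omega> "x / y" n] assms(4) that by (simp add: Z_def less_imp_le)
  have "measure P {\<omega>\<in>space P. M n \<omega> \<ge> x \<and> qvar M n \<omega> \<le> y} \<le> measure P {\<omega>\<in>space P. c \<le> Z \<omega>}"
  proof (rule finite_measure_mono)
    show "{\<omega>\<in>space P. c \<le> Z \<omega>} \<in> events"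
      by measurable
  qed (use assms(7,8) in \<open>auto simp: Z_def c_def exp_half_square_le_exp_qvar_process\<close>)
  also have "\<dots> \<le> (\<integral>\<omega>. Z \<omega> \<partial>P) / c"
    using Z by (intro integral_Markov_inequality_measure[where A = "space P"] integrable_const_bound[where B = "exp (1 / 2) ^ n"] AE_I2)
      (auto simp: c_def)
  also have "\<dots> \<le> 1 / c"
    using integral_exp_qvar_process_le_1[OF assms(1) F adapted _ assms(5), of "x / y" n] assms(4,7,8)
    by (simp add: Z_def c_def divide_right_mono)
  finally show ?thesis
    by (simp add: c_def exp_minus inverse_eq_divide)
qed

end
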